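(* Let $N\in\mathbb{N}^*$, $\sigma>0$, and let $W$ be an $N\times N$ random matrix with i.i.d. $\mathcal{N}(0,\sigma^2)$ entries. For $T\in\mathbb{N}^*$ let $B_{T,N}$ be its generalised matrix of moments of order $T$. Then for all $l_1,l_2\in\{0,\ldots,T-1\}$, \[B_{T,N}(l_1,l_2)\le\frac{1}{\sigma^2N}B_{T,N}(l_1+1,l_2+1),\] and for all $l_1,l_2\in\{0,\ldots,T-2\}$, \[B_{T,N}(l_1,l_2)\le\frac{1}{\sigma^4\left(\frac{l_1+l_2}{N^2}+1\right)}B_{T,N}(l_1+2,l_2+2).\]
   Context: Generalised matrix of moments: for $i\in[N]$, $\beta_{i,0}=1$, $\beta_{i,l}=\sum_{i_1,\ldots,i_l=1}^N W_{ii_1}\cdots W_{i_{l-1}i_l}$ for $l\ge1$, and $B_{T,N}(l_1,l_2)=\mathbb{E}\sum_{i=1}^N\beta_{i,l_1}\beta_{i,l_2}$, $0\le l_1,l_2\le T$. *)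

theory Defs
  imports "HOL-Probability.Probability"
begin

definition beta :: "(nat \<Rightarrow> nat \<Rightarrow> real) \<Rightarrow> nat \<Rightarrow> nat \<Rightarrow> nat \<Rightarrow> real" where
  "beta W N i l =
     (\<Sum>p\<in>{p. length p = l \<and> set p \<subseteq> {..<N}}.
        \<Prod>k<l. W ((i # p) ! k) ((i # p) ! (k + 1)))"

text \<open>The order T only restricts the admissible range 0 <= l1,l2 <= T.\<close>
definition BTN :: "'a measure \<Rightarrow> ('a \<Rightarrow> nat \<Rightarrow> nat \<Rightarrow> real) \<Rightarrow> nat \<Rightarrow> nat \<Rightarrow> nat \<Rightarrow> nat \<Rightarrow> real" where
  "BTN M W T N l1 l2 =
     prob_space.expectation M (\<lambda>\<omega>. \<Sum>i<N. beta (W \<omega>) N i l1 * beta (W \<omega>) N i l2)"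

end

theory Submission
  imports Defs
begin

text \<open>Expanding the products of path sums, \<open>B\<^sub>T\<^sub>,\<^sub>N(l\<^sub>1,l\<^sub>2)\<close> is a sum over pairs of paths of
  length \<open>l\<^sub>1, l\<^sub>2\<close> starting at a common vertex, and by independence each pair contributes the
  product of the Gaussian moments \<open>m\<^sub>c\<close> of the edge multiplicities \<open>c\<close>; all these moments are
  nonnegative and satisfy \<open>m\<^sub>c\<^sub>+\<^sub>2 = (c + 1) \<sigma>\<^sup>2 m\<^sub>c\<close>. Prolonging both paths of a pair at their
  start by the same edge \<open>(i,j)\<close> thus multiplies the contribution by at least \<open>\<sigma>\<^sup>2\<close>, and
  there are \<open>N\<close> choices of the new start \<open>i\<close>. Prolonging twice, by \<open>(i,j)\<close> and \<open>(j,k)\<close>,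
  multiplies it by at least \<open>\<sigma>\<^sup>4 (c\<^sub>i\<^sub>j + 1)\<close>, where \<open>c\<^sub>i\<^sub>j\<close> is the multiplicity of \<open>(i,j)\<close> in
  the old pair, and summing over \<open>i, j\<close> gives \<open>\<sigma>\<^sup>4 (N\<^sup>2 + l\<^sub>1 + l\<^sub>2)\<close>. Dropping the pairs whose
  two prolongations differ only decreases the sum.\<close>

definition gaussian_moment :: "real \<Rightarrow> nat \<Rightarrow> real" where
  "gaussian_moment s n = integral\<^sup>L lborel (\<lambda>x. normal_density 0 s x * x ^ n)"

lemma gaussian_moment_even:
  "0 < s \<Longrightarrow> gaussian_moment s (2 * k) = fact (2 * k) / ((2 / s\<^sup>2) ^ k * fact k)"
  using integral_normal_moment_even[where \<sigma>=s and k=k and \<mu>=0] by (simp add: gaussian_moment_def)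

lemma gaussian_moment_odd: "0 < s \<Longrightarrow> gaussian_moment s (2 * k + 1) = 0"
  using integral_normal_moment_odd[where \<sigma>=s and k=k and \<mu>=0] by (simp add: gaussian_moment_def)

lemma gaussian_moment_0: "0 < s \<Longrightarrow> gaussian_moment s 0 = 1"
  using gaussian_moment_even[of s 0] by simp

lemma gaussian_moment_nonneg:
  assumes "0 < s"
  shows "0 \<le> gaussian_moment s n"
proof (cases "even n")
  case True
  then obtain k where "n = 2 * k" by (auto elim: evenE)
  then show ?thesis using assms by (simp add: gaussian_moment_even)
next
  case False
  then obtain k where "n = 2 * k + 1" by (auto elim: oddE)
  then show ?thesis using gaussian_moment_odd[OF assms, of k] by simp
qed

lemma gaussian_moment_add_2:
  assumes s: "0 < s"
  shows "gaussian_moment s (n + 2) = (real n + 1) * s\<^sup>2 * gaussian_moment s n"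
proof (cases "even n")
  case True
  then obtain k where n: "n = 2 * k" by (auto elim: evenE)
  have fact_2Suc: "fact (2 * Suc k) = 2 * (real k + 1) * (2 * real k + 1) * (fact (2 * k) :: real)"
    by (simp add: algebra_simps)
  have cancel: "2 * (real k + 1) * (2 * real k + 1) * F / ((2 / s\<^sup>2) * P * ((real k + 1) * G))
      = (2 * real k + 1) * s\<^sup>2 * (F / (P * G))" if "P \<noteq> 0" "G \<noteq> 0" for F P G :: real
    using that s by (simp add: divide_simps add_pos_pos)
  have "n + 2 = 2 * Suc k" using n by simp
  then have "gaussian_moment s (n + 2) = 2 * (real k + 1) * (2 * real k + 1) * fact (2 * k)
      / ((2 / s\<^sup>2) * (2 / s\<^sup>2) ^ k * ((real k + 1) * fact k))"
    using gaussian_moment_even[OF s, of "Suc k"] by (simp only: fact_2Suc fact_Suc power_Suc) simp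
  then show ?thesis
    using s n cancel[of "(2 / s\<^sup>2) ^ k" "fact k" "fact (2 * k)"] gaussian_moment_even[OF s, of k]
    by simp
next
  case False
  then obtain k where n: "n = 2 * k + 1" by (auto elim: oddE)
  then have "n + 2 = 2 * Suc k + 1" by simp
  then show ?thesis
    using n gaussian_moment_odd[OF s, of k] gaussian_moment_odd[OF s, of "Suc k"] by simp
qed

lemma distributed_normal_power:
  assumes "0 < s" and X: "distributed M lborel X (\<lambda>x. ennreal (normal_density 0 s x))"
  shows "integrable M (\<lambda>\<omega>. X \<omega> ^ n)" and "integral\<^sup>L M (\<lambda>\<omega>. X \<omega> ^ n) = gaussian_moment s n"
  using assms(1) integrable_normal_moment[where \<mu>=0 and \<sigma>=s and k=n]
    distributed_integrable[OF X, of "\<lambda>x. x ^ n"] distributed_integral[OF X, of "\<lambda>x. x ^ n"]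
  by (simp_all add: gaussian_moment_def)

definition edge_monomial :: "(nat \<Rightarrow> nat \<Rightarrow> real) \<Rightarrow> (nat \<times> nat) multiset \<Rightarrow> real" where
  "edge_monomial w A = (\<Prod>e\<in>#A. case_prod w e)"

definition gaussian_weight :: "real \<Rightarrow> (nat \<times> nat) multiset \<Rightarrow> real" where
  "gaussian_weight s A = (\<Prod>e\<in>set_mset A. gaussian_moment s (count A e))"

lemma edge_monomial_add_mset: "edge_monomial w (add_mset e A) = case_prod w e * edge_monomial w A"
  by (simp add: edge_monomial_def)

lemma edge_monomial_union: "edge_monomial w (A + B) = edge_monomial w A * edge_monomial w B"
  by (simp add: edge_monomial_def)

lemma
  assumes "prob_space M" and s: "0 < s"
    and indep: "prob_space.indep_vars M (\<lambda>_. borel) (\<lambda>(i, j) \<omega>. W \<omega> i j) ({..<N} \<times> {..<N})"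
    and normal: "\<And>i j. i < N \<Longrightarrow> j < N \<Longrightarrow>
           distributed M lborel (\<lambda>\<omega>. W \<omega> i j) (\<lambda>x. ennreal (normal_density 0 s x))"
    and A: "set_mset A \<subseteq> {..<N} \<times> {..<N}"
  shows integrable_edge_monomial: "integrable M (\<lambda>\<omega>. edge_monomial (W \<omega>) A)"
    and integral_edge_monomial: "integral\<^sup>L M (\<lambda>\<omega>. edge_monomial (W \<omega>) A) = gaussian_weight s A"
proof -
  interpret prob_space M by fact
  define X where "X e \<omega> = case_prod (W \<omega>) e ^ count A e" for e \<omega>
  have monomial_eq: "(\<lambda>\<omega>. edge_monomial (W \<omega>) A) = (\<lambda>\<omega>. \<Prod>e\<in>set_mset A. X e \<omega>)"
    by (simp add: edge_monomial_def image_prod_mset_multiplicity[symmetric] X_def)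
  have "indep_vars (\<lambda>_. borel) (\<lambda>(i, j) \<omega>. W \<omega> i j) (set_mset A)"
    by (rule indep_vars_subset[OF indep A])
  then have "indep_vars (\<lambda>_. borel) (\<lambda>e \<omega>. ((\<lambda>(i, j) \<omega>. W \<omega> i j) e \<omega>) ^ count A e) (set_mset A)"
    by (rule indep_vars_compose2) auto
  then have indep_X: "indep_vars (\<lambda>_. borel) X (set_mset A)"
    by (simp add: X_def[abs_def] case_prod_beta)
  have moment_X: "integrable M (X e) \<and> integral\<^sup>L M (X e) = gaussian_moment s (count A e)"
    if "e \<in> set_mset A" for e
  proof -
    obtain i j where e: "e = (i, j)" by force
    with that A have "i < N" "j < N" by auto
    then show ?thesis
      using distributed_normal_power[OF s normal] by (simp add: X_def[abs_def] e)
  qed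
  show "integrable M (\<lambda>\<omega>. edge_monomial (W \<omega>) A)"
    unfolding monomial_eq using indep_vars_integrable[OF _ indep_X] moment_X by auto
  show "integral\<^sup>L M (\<lambda>\<omega>. edge_monomial (W \<omega>) A) = gaussian_weight s A"
    unfolding monomial_eq gaussian_weight_def
    using indep_vars_lebesgue_integral[OF _ indep_X] moment_X by auto
qed

lemma gaussian_weight_nonneg: "0 < s \<Longrightarrow> 0 \<le> gaussian_weight s A"
  unfolding gaussian_weight_def by (intro prod_nonneg) (simp add: gaussian_moment_nonneg)

lemma gaussian_weight_add_double:
  assumes s: "0 < s"
  shows "gaussian_weight s (A + {#e, e#}) = (real (count A e) + 1) * s\<^sup>2 * gaussian_weight s A"
proof -
  let ?rest = "\<Prod>x\<in>set_mset A - {e}. gaussian_moment s (count A x)"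
  have weight_A: "gaussian_weight s A = gaussian_moment s (count A e) * ?rest"
    using s by (cases "e \<in># A")
      (simp_all add: gaussian_weight_def prod.remove gaussian_moment_0 not_in_iff)
  have "gaussian_weight s (A + {#e, e#}) = gaussian_moment s (count A e + 2)
      * (\<Prod>x\<in>set_mset A - {e}. gaussian_moment s (count (A + {#e, e#}) x))"
    unfolding gaussian_weight_def by (simp add: prod.insert_remove)
  also have "(\<Prod>x\<in>set_mset A - {e}. gaussian_moment s (count (A + {#e, e#}) x)) = ?rest"
    by (rule prod.cong) auto
  finally show ?thesis using weight_A gaussian_moment_add_2[OF s] by simp
qed

lemma gaussian_weight_add_double_ge:
  "0 < s \<Longrightarrow> s\<^sup>2 * gaussian_weight s A \<le> gaussian_weight s (A + {#e, e#})"
  using gaussian_weight_add_double[of s A e] gaussian_weight_nonneg[of s A]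
  by (simp add: mult_right_mono)

lemma gaussian_weight_add_two_doubles_ge:
  assumes s: "0 < s"
  shows "s ^ 4 * (real (count A e) + 1) * gaussian_weight s A
    \<le> gaussian_weight s (A + {#e', e'#} + {#e, e#})"
proof -
  let ?A' = "A + {#e', e'#}"
  have "s ^ 4 * (real (count A e) + 1) * gaussian_weight s A
      = ((real (count A e) + 1) * s\<^sup>2) * (s\<^sup>2 * gaussian_weight s A)"
    by (simp add: power4_eq_xxxx power2_eq_square mult_ac)
  also have "\<dots> \<le> ((real (count ?A' e) + 1) * s\<^sup>2) * gaussian_weight s ?A'"
    using gaussian_weight_add_double_ge[OF s] gaussian_weight_nonneg[OF s]
    by (intro mult_mono) auto
  also have "\<dots> = gaussian_weight s (?A' + {#e, e#})"
    using gaussian_weight_add_double[OF s] by simp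
  finally show ?thesis .
qed

lemma sum_count_eq_size:
  assumes "finite A" and "set_mset X \<subseteq> A"
  shows "(\<Sum>x\<in>A. count X x) = size X"
proof -
  have "(\<Sum>x\<in>A. count X x) = (\<Sum>x\<in>set_mset X. count X x)"
    using assms by (intro sum.mono_neutral_right) (auto simp: not_in_iff)
  then show ?thesis by (simp add: size_multiset_overloaded_eq)
qed

lemma sum_diagonal_le:
  fixes g :: "'a \<Rightarrow> 'a \<Rightarrow> 'b :: {semiring_1, ordered_comm_monoid_add}"
  assumes "finite A" and "\<And>x y. x \<in> A \<Longrightarrow> y \<in> A \<Longrightarrow> 0 \<le> g x y"
  shows "(\<Sum>x\<in>A. g x x) \<le> (\<Sum>x\<in>A. \<Sum>y\<in>A. g x y)"
proof (rule sum_mono)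
  fix x assume "x \<in> A"
  then show "g x x \<le> (\<Sum>y\<in>A. g x y)"
    using assms by (intro member_le_sum[of x A "g x"]) auto
qed

fun path_edges :: "nat \<Rightarrow> nat list \<Rightarrow> (nat \<times> nat) multiset" where
  "path_edges i [] = {#}"
| "path_edges i (j # p) = add_mset (i, j) (path_edges j p)"

definition paths :: "nat \<Rightarrow> nat \<Rightarrow> nat list set" where
  "paths N l = {p. length p = l \<and> set p \<subseteq> {..<N}}"

lemma size_path_edges: "size (path_edges i p) = length p"
  by (induction p arbitrary: i) auto

lemma set_path_edges_subset:
  "i < N \<Longrightarrow> set p \<subseteq> {..<N} \<Longrightarrow> set_mset (path_edges i p) \<subseteq> {..<N} \<times> {..<N}"
  by (induction p arbitrary: i) auto

lemma prod_path_eq_edge_monomial: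
  "(\<Prod>k<length p. w ((i # p) ! k) ((i # p) ! (k + 1))) = edge_monomial w (path_edges i p)"
proof (induction p arbitrary: i)
  case Nil
  then show ?case by (simp add: edge_monomial_def)
next
  case (Cons j p)
  then show ?case
    by (simp add: prod.lessThan_Suc_shift edge_monomial_add_mset del: prod.lessThan_Suc)
qed

lemma beta_eq_sum_paths: "beta w N i l = (\<Sum>p\<in>paths N l. edge_monomial w (path_edges i p))"
  unfolding beta_def paths_def by (rule sum.cong) (auto simp: prod_path_eq_edge_monomial[symmetric])

lemma sum_paths_Suc: "(\<Sum>p\<in>paths N (Suc l). f p) = (\<Sum>j<N. \<Sum>p\<in>paths N l. f (j # p))"
proof -
  have paths_Suc: "paths N (Suc l) = (\<lambda>(j, p). j # p) ` ({..<N} \<times> paths N l)"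
    unfolding paths_def by (auto simp: length_Suc_conv image_iff)
  have "inj_on (\<lambda>(j, p). j # p) ({..<N} \<times> paths N l)"
    by (auto simp: inj_on_def)
  from sum.reindex[OF this, of f] show ?thesis
    unfolding paths_Suc by (simp add: sum.cartesian_product comp_def case_prod_beta)
qed

text \<open>\<open>C\<close> collects the edges of earlier prolongations of the pair of paths.\<close>

definition path_pair_moment ::
    "real \<Rightarrow> nat \<Rightarrow> (nat \<times> nat) multiset \<Rightarrow> nat \<Rightarrow> nat \<Rightarrow> nat \<Rightarrow> real" where
  "path_pair_moment s N C i l1 l2 =
     (\<Sum>p\<in>paths N l1. \<Sum>q\<in>paths N l2. gaussian_weight s (path_edges i p + path_edges i q + C))"

definition moment_sum :: "real \<Rightarrow> nat \<Rightarrow> nat \<Rightarrow> nat \<Rightarrow> real" where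
  "moment_sum s N l1 l2 = (\<Sum>i<N. path_pair_moment s N {#} i l1 l2)"

lemma path_pair_moment_nonneg: "0 < s \<Longrightarrow> 0 \<le> path_pair_moment s N C i l1 l2"
  unfolding path_pair_moment_def by (intro sum_nonneg gaussian_weight_nonneg)

lemma moment_sum_nonneg: "0 < s \<Longrightarrow> 0 \<le> moment_sum s N l1 l2"
  unfolding moment_sum_def by (intro sum_nonneg path_pair_moment_nonneg)

lemma BTN_eq_moment_sum:
  assumes "prob_space M" and "0 < s"
    and "prob_space.indep_vars M (\<lambda>_. borel) (\<lambda>(i, j) \<omega>. W \<omega> i j) ({..<N} \<times> {..<N})"
    and "\<And>i j. i < N \<Longrightarrow> j < N \<Longrightarrow>
           distributed M lborel (\<lambda>\<omega>. W \<omega> i j) (\<lambda>x. ennreal (normal_density 0 s x))"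
  shows "BTN M W T N l1 l2 = moment_sum s N l1 l2"
proof -
  have edges: "set_mset (path_edges i p + path_edges i q) \<subseteq> {..<N} \<times> {..<N}"
    if "i \<in> {..<N}" "p \<in> paths N l1" "q \<in> paths N l2" for i p q
    using that set_path_edges_subset[of i N p] set_path_edges_subset[of i N q]
    by (auto simp: paths_def)
  have "(\<lambda>\<omega>. \<Sum>i<N. beta (W \<omega>) N i l1 * beta (W \<omega>) N i l2) = (\<lambda>\<omega>. \<Sum>i<N. \<Sum>p\<in>paths N l1.
      \<Sum>q\<in>paths N l2. edge_monomial (W \<omega>) (path_edges i p + path_edges i q))"
    by (simp add: beta_eq_sum_paths sum_product edge_monomial_union)
  then show ?thesis
    unfolding BTN_def moment_sum_def path_pair_moment_def
    using integrable_edge_monomial[OF assms edges] integral_edge_monomial[OF assms edges]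
    by simp
qed

lemma path_pair_moment_Suc_ge:
  assumes s: "0 < s"
  shows "(\<Sum>j<N. path_pair_moment s N (C + {#(i, j), (i, j)#}) j l1 l2)
    \<le> path_pair_moment s N C i (Suc l1) (Suc l2)"
proof -
  let ?g = "\<lambda>j j'. \<Sum>p\<in>paths N l1. \<Sum>q\<in>paths N l2.
    gaussian_weight s (path_edges i (j # p) + path_edges i (j' # q) + C)"
  have "path_pair_moment s N (C + {#(i, j), (i, j)#}) j l1 l2 = ?g j j" for j
    unfolding path_pair_moment_def by (intro sum.cong refl arg_cong[where f="gaussian_weight s"])
      (simp add: multiset_eq_iff)
  moreover have "path_pair_moment s N C i (Suc l1) (Suc l2) = (\<Sum>j<N. \<Sum>j'<N. ?g j j')"
    unfolding path_pair_moment_def sum_paths_Suc by (simp add: sum.swap[of _ "paths N l1"])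
  ultimately show ?thesis
    using sum_diagonal_le[of "{..<N}" ?g] by (simp add: sum_nonneg gaussian_weight_nonneg s)
qed

lemma moment_sum_Suc_ge:
  assumes s: "0 < s"
  shows "s\<^sup>2 * real N * moment_sum s N l1 l2 \<le> moment_sum s N (Suc l1) (Suc l2)"
proof -
  have "s\<^sup>2 * real N * moment_sum s N l1 l2 = (\<Sum>i<N. \<Sum>j<N. s\<^sup>2 * path_pair_moment s N {#} j l1 l2)"
    by (simp add: moment_sum_def sum_distrib_left mult_ac)
  also have "\<dots> \<le> (\<Sum>i<N. \<Sum>j<N. path_pair_moment s N {#(i, j), (i, j)#} j l1 l2)"
    unfolding path_pair_moment_def sum_distrib_left
    using gaussian_weight_add_double_ge[OF s] by (intro sum_mono) simp
  also have "\<dots> \<le> moment_sum s N (Suc l1) (Suc l2)"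
    unfolding moment_sum_def using path_pair_moment_Suc_ge[OF s, of N "{#}"]
    by (intro sum_mono) simp
  finally show ?thesis .
qed

lemma moment_sum_Suc_Suc_ge:
  assumes s: "0 < s"
  shows "s ^ 4 * (real N ^ 2 + real l1 + real l2) * moment_sum s N l1 l2
    \<le> moment_sum s N (l1 + 2) (l2 + 2)"
proof -
  define X where "X k p q = path_edges k p + path_edges k q" for k p q
  define D where "D i j = {#(i, j), (i, j)#}" for i j :: nat
  let ?E = "{..<N} \<times> {..<N}"
  let ?lower = "\<lambda>k p q e. s ^ 4 * (real (count (X k p q) e) + 1) * gaussian_weight s (X k p q)"
  have sum_counts: "(\<Sum>e\<in>?E. real (count (X k p q) e) + 1) = real N ^ 2 + real l1 + real l2"
    if "k < N" "p \<in> paths N l1" "q \<in> paths N l2" for k p q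
  proof -
    have "set_mset (X k p q) \<subseteq> ?E"
      using that set_path_edges_subset[of k N p] set_path_edges_subset[of k N q]
      by (auto simp: paths_def X_def)
    then show ?thesis
      using sum_count_eq_size[of ?E "X k p q"] that
      by (simp add: sum.distrib power2_eq_square size_path_edges X_def paths_def flip: of_nat_sum)
  qed
  have "s ^ 4 * (real N ^ 2 + real l1 + real l2) * moment_sum s N l1 l2 = (\<Sum>k<N. \<Sum>p\<in>paths N l1.
      \<Sum>q\<in>paths N l2. s ^ 4 * (real N ^ 2 + real l1 + real l2) * gaussian_weight s (X k p q))"
    unfolding moment_sum_def path_pair_moment_def X_def by (simp add: sum_distrib_left)
  also have "\<dots> = (\<Sum>k<N. \<Sum>p\<in>paths N l1. \<Sum>q\<in>paths N l2. \<Sum>e\<in>?E. ?lower k p q e)"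
    by (intro sum.cong refl)
      (simp only: sum_counts lessThan_iff sum_distrib_right[symmetric] sum_distrib_left[symmetric])
  also have "\<dots> = (\<Sum>e\<in>?E. \<Sum>k<N. \<Sum>p\<in>paths N l1. \<Sum>q\<in>paths N l2. ?lower k p q e)"
    by (simp only: sum.swap[of _ ?E])
  also have "\<dots> \<le> (\<Sum>(i, j)\<in>?E. \<Sum>k<N. path_pair_moment s N (D i j + D j k) k l1 l2)"
  proof -
    have "?lower k p q (i, j) \<le> gaussian_weight s (path_edges k p + path_edges k q + (D i j + D j k))"
      for i j k p q
      using gaussian_weight_add_two_doubles_ge[OF s, of "X k p q" "(i, j)" "(j, k)"]
      by (simp add: X_def D_def add_mset_commute)
    then show ?thesis
      unfolding path_pair_moment_def by (auto intro!: sum_mono)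
  qed
  also have "\<dots> \<le> (\<Sum>i<N. \<Sum>j<N. path_pair_moment s N (D i j) j (Suc l1) (Suc l2))"
    unfolding sum.cartesian_product[symmetric]
    using path_pair_moment_Suc_ge[OF s] by (intro sum_mono) (simp add: D_def)
  also have "\<dots> \<le> moment_sum s N (l1 + 2) (l2 + 2)"
    unfolding moment_sum_def using path_pair_moment_Suc_ge[OF s, of N "{#}"]
    by (intro sum_mono) (simp add: D_def)
  finally show ?thesis .
qed

theorem mainTheorem13:
  fixes M :: "'a measure" and W :: "'a \<Rightarrow> nat \<Rightarrow> nat \<Rightarrow> real"
    and N T :: nat and \<sigma> :: real
  assumes "prob_space M"
    and "N \<ge> 1" and "T \<ge> 1" and "\<sigma> > 0"
    and "prob_space.indep_vars M (\<lambda>_. borel) (\<lambda>(i, j) \<omega>. W \<omega> i j) ({..<N} \<times> {..<N})"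
    and "\<And>i j. i < N \<Longrightarrow> j < N \<Longrightarrow>
           distributed M lborel (\<lambda>\<omega>. W \<omega> i j) (\<lambda>x. ennreal (normal_density 0 \<sigma> x))"
  shows "(\<forall>l1 l2. l1 \<le> T - 1 \<and> l2 \<le> T - 1 \<longrightarrow>
            BTN M W T N l1 l2 \<le> 1 / (\<sigma>\<^sup>2 * real N) * BTN M W T N (l1 + 1) (l2 + 1))
       \<and> (\<forall>l1 l2. T \<ge> 2 \<and> l1 \<le> T - 2 \<and> l2 \<le> T - 2 \<longrightarrow>
            BTN M W T N l1 l2 \<le>
              1 / (\<sigma> ^ 4 * ((real l1 + real l2) / (real N)\<^sup>2 + 1)) * BTN M W T N (l1 + 2) (l2 + 2))"
proof -
  note B = BTN_eq_moment_sum[OF assms(1,4,5,6)]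
  have "BTN M W T N l1 l2 \<le> 1 / (\<sigma>\<^sup>2 * real N) * BTN M W T N (l1 + 1) (l2 + 1)" for l1 l2
    using moment_sum_Suc_ge[OF assms(4), of N l1 l2] assms(2,4)
    by (simp add: B pos_le_divide_eq mult.commute)
  moreover have "BTN M W T N l1 l2 \<le>
      1 / (\<sigma> ^ 4 * ((real l1 + real l2) / (real N)\<^sup>2 + 1)) * BTN M W T N (l1 + 2) (l2 + 2)" for l1 l2
  proof -
    let ?c = "\<sigma> ^ 4 * ((real l1 + real l2) / (real N)\<^sup>2 + 1)"
    have "(real l1 + real l2) / (real N)\<^sup>2 \<le> real l1 + real l2"
      using assms(2) by (simp add: divide_le_eq mult_le_cancel_left1 one_le_power)
    moreover have "1 \<le> (real N)\<^sup>2" using assms(2) by (simp add: one_le_power)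
    ultimately have "?c \<le> \<sigma> ^ 4 * (real N ^ 2 + real l1 + real l2)"
      by (intro mult_left_mono) simp_all
    then have "?c * moment_sum \<sigma> N l1 l2 \<le> moment_sum \<sigma> N (l1 + 2) (l2 + 2)"
      using moment_sum_Suc_Suc_ge[OF assms(4)] moment_sum_nonneg[OF assms(4)]
      by (meson mult_right_mono order_trans)
    moreover have "0 < ?c" using assms(4) by (simp add: add_nonneg_pos)
    ultimately show ?thesis by (simp add: B pos_le_divide_eq mult.commute)
  qed
  ultimately show ?thesis by blast
qed

end
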